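(* Let $G$ be a connected, locally finite graph satisfying the Distinct Spheres Condition with respect to a vertex $u$. Then only finitely many vertices in the orbit of $u$ under the automorphism group $\mathrm{Aut}(G)$ are $\sim$-equivalent to $u$.
   Context: All graphs are simple with vertex set $V$; $d$ is graph distance, $B_x(r)=\{y: d(x,y)\le r\}$, $S_x(r)=\{y: d(x,y)=r\}$. $G$ satisfies the Distinct Spheres Condition with respect to $u$ if for all distinct vertices $x,y$ with $d(u,x)=d(u,y)$, $S_x(n)\ne S_y(n)$ for infinitely many $n\in\mathbb{N}$. The relation $\sim$ on $V$: $x\sim y$ iff there exists $n\in\mathbb{N}$ with $B_x(n)=B_y(n)$. *)

theory Defs
  imports Main
begin

text \<open>Simple graph on vertex type 'a (vertex set V = UNIV) given by an edge relation E.\<close>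

definition simple_graph :: "('a \<Rightarrow> 'a \<Rightarrow> bool) \<Rightarrow> bool" where
  "simple_graph E \<longleftrightarrow> (\<forall>x y. E x y \<longrightarrow> E y x) \<and> (\<forall>x. \<not> E x x)"

definition connected_graph :: "('a \<Rightarrow> 'a \<Rightarrow> bool) \<Rightarrow> bool" where
  "connected_graph E \<longleftrightarrow> (\<forall>x y. E\<^sup>*\<^sup>* x y)"

definition locally_finite :: "('a \<Rightarrow> 'a \<Rightarrow> bool) \<Rightarrow> bool" where
  "locally_finite E \<longleftrightarrow> (\<forall>x. finite {y. E x y})"

definition gdist :: "('a \<Rightarrow> 'a \<Rightarrow> bool) \<Rightarrow> 'a \<Rightarrow> 'a \<Rightarrow> nat" where
  "gdist E x y = (LEAST n. (E ^^ n) x y)"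

definition ball :: "('a \<Rightarrow> 'a \<Rightarrow> bool) \<Rightarrow> 'a \<Rightarrow> nat \<Rightarrow> 'a set" where
  "ball E x r = {y. gdist E x y \<le> r}"

definition sphere :: "('a \<Rightarrow> 'a \<Rightarrow> bool) \<Rightarrow> 'a \<Rightarrow> nat \<Rightarrow> 'a set" where
  "sphere E x r = {y. gdist E x y = r}"

definition distinct_spheres :: "('a \<Rightarrow> 'a \<Rightarrow> bool) \<Rightarrow> 'a \<Rightarrow> bool" where
  "distinct_spheres E u \<longleftrightarrow>
     (\<forall>x y. x \<noteq> y \<and> gdist E u x = gdist E u y \<longrightarrow>
        infinite {n::nat. sphere E x n \<noteq> sphere E y n})"

definition ball_equiv :: "('a \<Rightarrow> 'a \<Rightarrow> bool) \<Rightarrow> 'a \<Rightarrow> 'a \<Rightarrow> bool" where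
  "ball_equiv E x y \<longleftrightarrow> (\<exists>n::nat. ball E x n = ball E y n)"

definition automorphism :: "('a \<Rightarrow> 'a \<Rightarrow> bool) \<Rightarrow> ('a \<Rightarrow> 'a) \<Rightarrow> bool" where
  "automorphism E f \<longleftrightarrow> bij f \<and> (\<forall>x y. E x y \<longleftrightarrow> E (f x) (f y))"

definition aut_orbit :: "('a \<Rightarrow> 'a \<Rightarrow> bool) \<Rightarrow> 'a \<Rightarrow> 'a set" where
  "aut_orbit E u = {f u | f. automorphism E f}"

end

theory Submission
  imports Defs
begin

text \<open>Once two balls of the same radius coincide, all larger balls coincide, so two
  \<open>\<sim>\<close>-equivalent vertices have only finitely many distinct spheres; the Distinct Spheres
  Condition therefore forbids two \<open>\<sim>\<close>-equivalent vertices at equal distance from \<open>u\<close>, and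
  it is inherited by every vertex of the orbit of \<open>u\<close>. Hence distances from \<open>u\<close> separate
  the class \<open>C\<close> of \<open>u\<close> inside the orbit. If \<open>v \<in> C\<close>, \<open>v \<noteq> u\<close>, has \<open>B\<^sub>v(N) = B\<^sub>u(N)\<close>, then every
  \<open>c\<close> with \<open>d(u,c) > N\<close> satisfies \<open>d(c,v) = d(c,u)\<close>; for \<open>c \<in> C\<close> this contradicts the
  condition at \<open>c\<close>. So \<open>C\<close> lies in \<open>B\<^sub>u(N)\<close> and injects into \<open>{0..N}\<close>.\<close>

lemma relpowp_symmetric:
  assumes "symp E" "(E ^^ n) x y"
  shows "(E ^^ n) y x"
  using assms(2)
proof (induction n arbitrary: x y)
  case 0
  then show ?case by simp
next
  case (Suc n)
  from Suc.prems obtain w where "(E ^^ n) x w" "E w y" by (rule relpowp_Suc_E)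
  then show ?case using Suc.IH \<open>symp E\<close> by (meson relpowp_Suc_I2 sympD)
qed

lemma gdist_le_iff:
  assumes "connected_graph E"
  shows "gdist E x z \<le> m \<longleftrightarrow> (\<exists>k\<le>m. (E ^^ k) x z)"
proof
  obtain n where "(E ^^ n) x z"
    using assms rtranclp_power unfolding connected_graph_def by metis
  then have "(E ^^ gdist E x z) x z" unfolding gdist_def by (rule LeastI)
  moreover assume "gdist E x z \<le> m"
  ultimately show "\<exists>k\<le>m. (E ^^ k) x z" by blast
next
  assume "\<exists>k\<le>m. (E ^^ k) x z"
  then show "gdist E x z \<le> m" unfolding gdist_def by (meson Least_le order_trans)
qed

lemma gdist_commute:
  assumes "connected_graph E" "symp E"
  shows "gdist E x y = gdist E y x"
proof -
  have "gdist E x y \<le> m \<longleftrightarrow> gdist E y x \<le> m" for m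
    using gdist_le_iff[OF assms(1)] relpowp_symmetric[OF assms(2)] by metis
  then show ?thesis by (meson le_antisym order_refl)
qed

lemma ball_Suc:
  assumes "connected_graph E"
  shows "ball E x (Suc m) = ball E x m \<union> {z. \<exists>w\<in>ball E x m. E w z}"
proof -
  have "(\<exists>k\<le>Suc m. (E ^^ k) x z) \<longleftrightarrow>
      (\<exists>k\<le>m. (E ^^ k) x z) \<or> (\<exists>w. (\<exists>k\<le>m. (E ^^ k) x w) \<and> E w z)" for z
  proof
    assume "\<exists>k\<le>Suc m. (E ^^ k) x z"
    then obtain k where k: "k \<le> Suc m" "(E ^^ k) x z" by blast
    show "(\<exists>k\<le>m. (E ^^ k) x z) \<or> (\<exists>w. (\<exists>k\<le>m. (E ^^ k) x w) \<and> E w z)"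
    proof (cases k)
      case 0
      then show ?thesis using k by auto
    next
      case (Suc j)
      with k obtain w where "(E ^^ j) x w" "E w z" by (meson relpowp_Suc_E)
      then show ?thesis using k Suc by auto
    qed
  next
    assume "(\<exists>k\<le>m. (E ^^ k) x z) \<or> (\<exists>w. (\<exists>k\<le>m. (E ^^ k) x w) \<and> E w z)"
    then show "\<exists>k\<le>Suc m. (E ^^ k) x z"
      by (meson le_SucI relpowp_Suc_I Suc_le_mono)
  qed
  then show ?thesis unfolding ball_def using gdist_le_iff[OF assms] by auto
qed

lemma ball_eq_mono:
  assumes "connected_graph E" "ball E x n = ball E y n" "n \<le> m"
  shows "ball E x m = ball E y m"
  using assms(3)
proof (induction m rule: dec_induct)
  case base
  then show ?case using assms(2) .
next
  case (step m)
  then show ?case using ball_Suc[OF assms(1)] by simp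
qed

lemma sphere_eq_if_ball_eq:
  assumes "connected_graph E" "ball E x n = ball E y n" "n < m"
  shows "sphere E x m = sphere E y m"
proof -
  have "sphere E z m = ball E z m - ball E z (m - 1)" for z
    using \<open>n < m\<close> unfolding sphere_def ball_def by auto
  then show ?thesis using ball_eq_mono[OF assms(1,2)] \<open>n < m\<close> by simp
qed

lemma not_ball_equiv_if_distinct_spheres:
  assumes "connected_graph E" "distinct_spheres E w"
    and "x \<noteq> y" "gdist E w x = gdist E w y"
  shows "\<not> ball_equiv E x y"
proof
  assume "ball_equiv E x y"
  then obtain n where n: "ball E x n = ball E y n" unfolding ball_equiv_def by blast
  have "{m. sphere E x m \<noteq> sphere E y m} \<subseteq> {..n}"
  proof
    fix m
    assume "m \<in> {m. sphere E x m \<noteq> sphere E y m}"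
    then show "m \<in> {..n}" using sphere_eq_if_ball_eq[OF assms(1) n, of m] by force
  qed
  then have "finite {m. sphere E x m \<noteq> sphere E y m}" by (rule finite_subset) simp
  then show False using assms(2-4) unfolding distinct_spheres_def by blast
qed

lemma ball_equiv_sym: "ball_equiv E x y \<Longrightarrow> ball_equiv E y x"
  unfolding ball_equiv_def by (blast intro: sym)

lemma ball_equiv_trans:
  assumes "connected_graph E" "ball_equiv E x y" "ball_equiv E y z"
  shows "ball_equiv E x z"
proof -
  obtain a b where a: "ball E x a = ball E y a" and b: "ball E y b = ball E z b"
    using assms(2,3) unfolding ball_equiv_def by blast
  have "ball E x (max a b) = ball E y (max a b)" using ball_eq_mono[OF assms(1) a] by simp
  also have "\<dots> = ball E z (max a b)" using ball_eq_mono[OF assms(1) b] by simp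
  finally show ?thesis unfolding ball_equiv_def by blast
qed

lemma relpowp_automorphism:
  assumes "automorphism E g"
  shows "(E ^^ n) (g x) (g y) \<longleftrightarrow> (E ^^ n) x y"
proof (induction n arbitrary: y)
  case 0
  have "inj g" using assms unfolding automorphism_def bij_def by blast
  then show ?case by (simp add: inj_eq)
next
  case (Suc n)
  have edge: "\<And>a b. E a b \<longleftrightarrow> E (g a) (g b)" and "surj g"
    using assms unfolding automorphism_def bij_def by auto
  show ?case
  proof
    assume "(E ^^ Suc n) (g x) (g y)"
    then obtain w where w: "(E ^^ n) (g x) w" "E w (g y)" by (rule relpowp_Suc_E)
    obtain w' where "w = g w'" using \<open>surj g\<close> by (metis surjD)
    then show "(E ^^ Suc n) x y" using w Suc.IH edge by (metis relpowp_Suc_I)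
  next
    assume "(E ^^ Suc n) x y"
    then obtain w where "(E ^^ n) x w" "E w y" by (rule relpowp_Suc_E)
    then show "(E ^^ Suc n) (g x) (g y)" using Suc.IH edge by (metis relpowp_Suc_I)
  qed
qed

lemma gdist_automorphism:
  assumes "automorphism E g"
  shows "gdist E (g x) (g y) = gdist E x y"
  unfolding gdist_def using relpowp_automorphism[OF assms] by simp

lemma sphere_automorphism:
  assumes "automorphism E g"
  shows "sphere E (g x) n = g ` sphere E x n"
proof -
  have "inj g" "surj g" using assms unfolding automorphism_def bij_def by auto
  have "z \<in> sphere E (g x) n \<longleftrightarrow> z \<in> g ` sphere E x n" for z
  proof -
    obtain z' where "z = g z'" using \<open>surj g\<close> by (metis surjD)
    then show ?thesis
      using gdist_automorphism[OF assms] \<open>inj g\<close> by (simp add: sphere_def inj_image_mem_iff)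
  qed
  then show ?thesis by blast
qed

lemma distinct_spheres_automorphism:
  assumes "automorphism E g" "distinct_spheres E u"
  shows "distinct_spheres E (g u)"
  unfolding distinct_spheres_def
proof (intro allI impI)
  fix x y
  assume xy: "x \<noteq> y \<and> gdist E (g u) x = gdist E (g u) y"
  have "inj g" "surj g" using assms(1) unfolding automorphism_def bij_def by auto
  then obtain x' y' where x': "x = g x'" and y': "y = g y'" by (metis surjD)
  then have "x' \<noteq> y'" "gdist E u x' = gdist E u y'"
    using xy gdist_automorphism[OF assms(1)] by auto
  then have "infinite {n. sphere E x' n \<noteq> sphere E y' n}"
    using assms(2) unfolding distinct_spheres_def by blast
  moreover have "sphere E x n \<noteq> sphere E y n \<longleftrightarrow> sphere E x' n \<noteq> sphere E y' n" for n
    using x' y' sphere_automorphism[OF assms(1)] \<open>inj g\<close> by (simp add: inj_image_eq_iff)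
  ultimately show "infinite {n. sphere E x n \<noteq> sphere E y n}" by simp
qed

lemma gdist_eq_if_ball_eq:
  assumes "connected_graph E" "ball E v N = ball E u N" "N < gdist E u c"
  shows "gdist E v c = gdist E u c"
proof -
  have "sphere E v (gdist E u c) = sphere E u (gdist E u c)"
    using sphere_eq_if_ball_eq[OF assms] .
  then show ?thesis unfolding sphere_def by blast
qed

lemma inj_on_gdist_ball_equiv_class:
  assumes "connected_graph E" "distinct_spheres E u"
  shows "inj_on (gdist E u) {v. ball_equiv E v u}"
proof (rule inj_onI)
  fix x y
  assume "x \<in> {v. ball_equiv E v u}" "y \<in> {v. ball_equiv E v u}" "gdist E u x = gdist E u y"
  then have "ball_equiv E x u" "ball_equiv E u y" using ball_equiv_sym by auto
  then have "ball_equiv E x y" by (rule ball_equiv_trans[OF assms(1)])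
  then show "x = y"
    using not_ball_equiv_if_distinct_spheres[OF assms] \<open>gdist E u x = gdist E u y\<close> by metis
qed

theorem mainTheorem6:
  fixes E :: "'a \<Rightarrow> 'a \<Rightarrow> bool" and u :: 'a
  assumes "simple_graph E" and "connected_graph E" and "locally_finite E"
    and "distinct_spheres E u"
  shows "finite {v \<in> aut_orbit E u. ball_equiv E v u}"
proof (cases "{v \<in> aut_orbit E u. ball_equiv E v u} \<subseteq> {u}")
  case True
  then show ?thesis by (rule finite_subset) simp
next
  case False
  let ?C = "{v \<in> aut_orbit E u. ball_equiv E v u}"
  have "symp E" using assms(1) unfolding simple_graph_def symp_def by blast
  obtain v N where v: "v \<in> ?C" "v \<noteq> u" and N: "ball E v N = ball E u N"
    using False unfolding ball_equiv_def by blast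
  have "gdist E u c \<le> N" if c: "c \<in> ?C" for c
  proof (rule ccontr)
    assume "\<not> gdist E u c \<le> N"
    then have "gdist E c v = gdist E c u"
      using gdist_eq_if_ball_eq[OF assms(2) N] gdist_commute[OF assms(2) \<open>symp E\<close>] by simp
    moreover obtain g where "automorphism E g" "c = g u"
      using c unfolding aut_orbit_def by blast
    then have "distinct_spheres E c" using distinct_spheres_automorphism assms(4) by simp
    ultimately show False
      using not_ball_equiv_if_distinct_spheres[OF assms(2) _ v(2)] v(1) by simp
  qed
  then have "gdist E u ` ?C \<subseteq> {..N}" by blast
  moreover have "inj_on (gdist E u) ?C"
    using inj_on_gdist_ball_equiv_class[OF assms(2,4)] by (rule inj_on_subset) blast
  ultimately show ?thesis by (meson finite_atMost finite_imageD finite_subset)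
qed

end
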